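(* Throw $m$ balls independently into $n$ bins, where each ball lands in bin $i$ with probability $p_i$ ($\sum_{i=1}^n p_i=1$), and let $L$ be the maximum number of balls in a single bin. If $m\in\Omega(n/\mathrm{polylog}\,n)$, then $L\in\Omega\left(\frac{\log n}{\log\log n}\right)$ asymptotically almost surely.
   Context: "Asymptotically almost surely" means with probability tending to $1$ as $n\to\infty$; $\mathrm{polylog}\,n$ denotes $(\log n)^{O(1)}$. *)

theory Defs
  imports "HOL-Probability.Probability"
begin

definition ball_pmf :: "nat \<Rightarrow> (nat \<Rightarrow> real) \<Rightarrow> nat pmf" where
  "ball_pmf n p = embed_pmf (\<lambda>i. if i < n then p i else 0)"

text \<open>m independent balls: outcome f j = bin of ball j (j < m).\<close>
definition throws :: "nat \<Rightarrow> nat \<Rightarrow> (nat \<Rightarrow> real) \<Rightarrow> (nat \<Rightarrow> nat) pmf" where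
  "throws m n p = Pi_pmf {..<m} 0 (\<lambda>_. ball_pmf n p)"

definition max_load :: "nat \<Rightarrow> nat \<Rightarrow> (nat \<Rightarrow> nat) \<Rightarrow> nat" where
  "max_load m n f = Max ((\<lambda>i. card {j \<in> {..<m}. f j = i}) ` {..<n})"

end

theory Submission
  imports Defs "HOL-Real_Asymp.Real_Asymp"
begin

text \<open>Let \<open>t\<close> be about \<open>c log n / log log n\<close>. If some bin has expected load \<open>m p\<^sub>i > t\<^sup>2\<close>,
split the balls into \<open>t\<close> blocks of \<open>m div t\<close> balls: unless some block misses that bin
entirely, the bin receives \<open>t\<close> balls, and each block misses it with probability at most
\<open>exp (1 - t)\<close>. Otherwise every expected load is at most \<open>t\<^sup>2\<close>, and the second moment method
applies to the number \<open>X\<close> of pairs \<open>(T, i)\<close> of a \<open>t\<close>-set \<open>T\<close> of balls all landing in bin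
\<open>i\<close>. By the power mean inequality \<open>E X = (m choose t) \<Sum>\<^sub>i p\<^sub>i ^ t \<ge> (m / t) ^ t / n ^ (t - 1)\<close>,
while pairs of overlapping sets contribute at most \<open>2 ^ t t ^ (2 t + 1) E X\<close> to \<open>E X\<^sup>2\<close>, so
\<open>P (X = 0) \<le> t (2 t\<^sup>3 n / m) ^ t / n\<close>. For \<open>m \<ge> C n / (log n) ^ k\<close> and \<open>c = 1 / (2 (k + 3))\<close>
this is \<open>n ^ (-1/2 + o(1))\<close>.\<close>

lemma pmf_ball_pmf:
  assumes nn: "\<And>i. i < n \<Longrightarrow> p i \<ge> 0" and s: "(\<Sum>i<n. p i) = 1"
  shows "pmf (ball_pmf n p) i = (if i < n then p i else 0)"
proof -
  let ?q = "\<lambda>i. if i < n then p i else 0"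
  have "(\<integral>\<^sup>+x. ennreal (?q x) \<partial>count_space UNIV) = (\<integral>\<^sup>+x. ennreal (?q x) \<partial>count_space {..<n})"
    by (subst nn_integral_count_space_indicator) (auto intro!: nn_integral_cong simp: indicator_def)
  also have "\<dots> = (\<Sum>x<n. ennreal (?q x))"
    by (simp add: nn_integral_count_space_finite)
  also have "\<dots> = ennreal (\<Sum>x<n. ?q x)"
    using nn by (intro sum_ennreal) auto
  also have "(\<Sum>x<n. ?q x) = 1" using s by simp
  finally show ?thesis
    unfolding ball_pmf_def using nn by (subst pmf_embed_pmf) auto
qed

lemma prob_throws_forall:
  assumes "U \<subseteq> {..<m}"
  shows "measure_pmf.prob (throws m n p) {f. \<forall>j\<in>U. f j \<in> B j}
    = (\<Prod>j\<in>U. measure_pmf.prob (ball_pmf n p) (B j))"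
proof -
  have "{f. \<forall>j\<in>U. f j \<in> B j} = Pi {..<m} (\<lambda>j. if j \<in> U then B j else UNIV)"
    using assms by (auto simp: Pi_def)
  then have "measure_pmf.prob (throws m n p) {f. \<forall>j\<in>U. f j \<in> B j}
      = (\<Prod>j\<in>{..<m}. measure_pmf.prob (ball_pmf n p) (if j \<in> U then B j else UNIV))"
    unfolding throws_def by (simp add: measure_Pi_pmf_Pi)
  also have "\<dots> = (\<Prod>j\<in>U. measure_pmf.prob (ball_pmf n p) (B j))"
    using assms by (intro prod.mono_neutral_cong_right) auto
  finally show ?thesis .
qed

definition all_in_bin :: "nat set \<Rightarrow> nat \<Rightarrow> (nat \<Rightarrow> nat) set" where
  "all_in_bin T i = {f. \<forall>j\<in>T. f j = i}"

lemma prob_all_in_bin: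
  assumes nn: "\<And>i. i < n \<Longrightarrow> p i \<ge> 0" and s: "(\<Sum>i<n. p i) = 1"
    and T: "T \<subseteq> {..<m}" and i: "i < n"
  shows "measure_pmf.prob (throws m n p) (all_in_bin T i) = p i ^ card T"
proof -
  have "all_in_bin T i = {f. \<forall>j\<in>T. f j \<in> {i}}" by (auto simp: all_in_bin_def)
  then show ?thesis
    using prob_throws_forall[OF T, of n p "\<lambda>_. {i}"] pmf_ball_pmf[OF nn s] i
    by (simp add: measure_pmf_single)
qed

lemma prob_all_in_bin_inter_le:
  assumes nn: "\<And>i. i < n \<Longrightarrow> p i \<ge> 0" and s: "(\<Sum>i<n. p i) = 1"
    and T: "T \<subseteq> {..<m}" "T' \<subseteq> {..<m}" and i: "i < n" "i' < n"
  shows "measure_pmf.prob (throws m n p) (all_in_bin T i \<inter> all_in_bin T' i')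
    \<le> p i ^ card T * p i' ^ card T'
       + (if T \<inter> T' \<noteq> {} \<and> i = i' then p i ^ card T * p i ^ card (T' - T) else 0)"
proof -
  let ?P = "measure_pmf.prob (throws m n p)"
  have fin: "finite T" "finite T'" using T finite_subset by blast+
  have prod_nonneg: "0 \<le> p i ^ card T * p i' ^ card T'" using nn i by simp
  consider (disjoint) "T \<inter> T' = {}" | (same_bin) "T \<inter> T' \<noteq> {}" "i = i'"
    | (clash) "T \<inter> T' \<noteq> {}" "i \<noteq> i'" by blast
  then show ?thesis
  proof cases
    case disjoint
    have "all_in_bin T i \<inter> all_in_bin T' i' = {f. \<forall>j\<in>T \<union> T'. f j \<in> (if j \<in> T then {i} else {i'})}"
      using disjoint by (auto simp: all_in_bin_def)
    then have "?P (all_in_bin T i \<inter> all_in_bin T' i')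
        = (\<Prod>j\<in>T \<union> T'. measure_pmf.prob (ball_pmf n p) (if j \<in> T then {i} else {i'}))"
      using T by (simp add: prob_throws_forall)
    also have "\<dots> = (\<Prod>j\<in>T. measure_pmf.prob (ball_pmf n p) (if j \<in> T then {i} else {i'}))
        * (\<Prod>j\<in>T'. measure_pmf.prob (ball_pmf n p) (if j \<in> T then {i} else {i'}))"
      using disjoint fin by (intro prod.union_disjoint) auto
    also have "\<dots> = (\<Prod>j\<in>T. p i) * (\<Prod>j\<in>T'. p i')"
      using disjoint pmf_ball_pmf[OF nn s] i
      by (intro arg_cong2[where f="(*)"] prod.cong) (auto simp: measure_pmf_single)
    finally show ?thesis using disjoint by simp
  next
    case same_bin
    have "all_in_bin T i \<inter> all_in_bin T' i' = all_in_bin (T \<union> (T' - T)) i"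
      using same_bin by (auto simp: all_in_bin_def)
    moreover have "card (T \<union> (T' - T)) = card T + card (T' - T)"
      using fin by (intro card_Un_disjoint) auto
    ultimately have "?P (all_in_bin T i \<inter> all_in_bin T' i') = p i ^ card T * p i ^ card (T' - T)"
      using prob_all_in_bin[OF nn s _ i(1), of "T \<union> (T' - T)" m] T by (simp add: power_add)
    then show ?thesis using same_bin prod_nonneg by simp
  next
    case clash
    then have "all_in_bin T i \<inter> all_in_bin T' i' = {}" by (auto simp: all_in_bin_def)
    then show ?thesis using clash prod_nonneg by simp
  qed
qed

lemma card_le_max_load:
  assumes "i < n"
  shows "card {j\<in>{..<m}. f j = i} \<le> max_load m n f"
  unfolding max_load_def using assms by (intro Max_ge) auto

lemma not_in_all_in_bin_if_max_load_less:
  assumes "max_load m n f < card T" and "T \<subseteq> {..<m}" and "i < n"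
  shows "f \<notin> all_in_bin T i"
proof
  assume "f \<in> all_in_bin T i"
  then have "T \<subseteq> {j\<in>{..<m}. f j = i}" using assms(2) by (auto simp: all_in_bin_def)
  then have "card T \<le> card {j\<in>{..<m}. f j = i}" by (intro card_mono) auto
  then show False using assms(1) card_le_max_load[OF assms(3), of m f] by simp
qed

section \<open>The second moment method\<close>

lemma prob_none_le_second_moment:
  fixes M :: "'a pmf" and E :: "'i \<Rightarrow> 'a set"
  assumes mu: "\<mu> = (\<Sum>a\<in>I. measure_pmf.prob M (E a))" and mupos: "\<mu> > 0"
   and V: "(\<Sum>a\<in>I. \<Sum>b\<in>I. measure_pmf.prob M (E a \<inter> E b)) \<le> \<mu>\<^sup>2 + V"
  shows "measure_pmf.prob M {x. \<forall>a\<in>I. x \<notin> E a} \<le> V / \<mu>\<^sup>2"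
proof -
  define X where "X x = (\<Sum>a\<in>I. indicator (E a) x :: real)" for x
  define Z where "Z = {x. \<forall>a\<in>I. x \<notin> E a}"
  have ind: "integrable (measure_pmf M) (indicator A :: 'a \<Rightarrow> real)" for A
    by (rule integrable_real_indicator) (auto simp: less_top[symmetric])
  have intX: "integrable M X" unfolding X_def[abs_def] using ind by (intro Bochner_Integration.integrable_sum) auto
  have EX: "measure_pmf.expectation M X = \<mu>"
    unfolding X_def[abs_def] mu using ind by (subst Bochner_Integration.integral_sum) auto
  have X2: "(X x)\<^sup>2 = (\<Sum>a\<in>I. \<Sum>b\<in>I. indicator (E a \<inter> E b) x)" for x
    unfolding X_def power2_eq_square sum_product
    by (intro sum.cong refl) (simp add: indicator_inter_arith)
  have intX2: "integrable M (\<lambda>x. (X x)\<^sup>2)" unfolding X2 using ind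
    by (intro Bochner_Integration.integrable_sum) auto
  have EX2: "measure_pmf.expectation M (\<lambda>x. (X x)\<^sup>2) = (\<Sum>a\<in>I. \<Sum>b\<in>I. measure_pmf.prob M (E a \<inter> E b))"
    unfolding X2 using ind by (simp add: Bochner_Integration.integral_sum)
  have eq: "(\<lambda>x. (X x - \<mu>)\<^sup>2) = (\<lambda>x. (X x)\<^sup>2 - (2*\<mu>* X x - \<mu>\<^sup>2))"
    by (auto simp: power2_eq_square algebra_simps)
  have intV: "integrable M (\<lambda>x. (X x - \<mu>)\<^sup>2)" unfolding eq using intX intX2 by auto
  have EV: "measure_pmf.expectation M (\<lambda>x. (X x - \<mu>)\<^sup>2) = measure_pmf.expectation M (\<lambda>x. (X x)\<^sup>2) - \<mu>\<^sup>2"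
    unfolding eq using intX intX2 EX by (simp add: power2_eq_square)
  have pt: "\<mu>\<^sup>2 * indicator Z x \<le> (X x - \<mu>)\<^sup>2" for x
  proof (cases "x \<in> Z")
    case True
    hence "X x = 0" unfolding X_def Z_def by (auto intro!: sum.neutral)
    thus ?thesis using True by simp
  qed simp
  have "\<mu>\<^sup>2 * measure_pmf.prob M Z = measure_pmf.expectation M (\<lambda>x. \<mu>\<^sup>2 * indicator Z x)"
    by simp
  also have "\<dots> \<le> measure_pmf.expectation M (\<lambda>x. (X x - \<mu>)\<^sup>2)"
    using pt intV ind by (intro integral_mono) auto
  also have "\<dots> \<le> V" using EV EX2 V by simp
  finally have "\<mu>\<^sup>2 * measure_pmf.prob M Z \<le> V" .
  thus ?thesis unfolding Z_def using mupos by (simp add: field_simps)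
qed

section \<open>Overlapping subsets and power sums\<close>

text \<open>\<open>T' \<mapsto> (T' \<inter> T, T' - T)\<close> is injective, and \<open>T' - T\<close> is smaller than \<open>T'\<close>
since \<open>T'\<close> meets \<open>T\<close>.\<close>

lemma sum_overlapping_subsets_le_binomial_sum:
  fixes x :: real
  assumes T: "T \<subseteq> {..<m}" and cT: "card T = t" and x: "0 \<le> x"
  shows "(\<Sum>T'\<in>{T'\<in>Pow {..<m}. card T' = t \<and> T \<inter> T' \<noteq> {}}. x ^ card (T' - T))
     \<le> 2 ^ t * (\<Sum>r<t. real (m choose r) * x ^ r)"
proof -
  define A where "A = {T'\<in>Pow {..<m}. card T' = t \<and> T \<inter> T' \<noteq> {}}"
  define S where "S = {R\<in>Pow {..<m}. card R < t}"
  define \<phi> where "\<phi> T' = (T' \<inter> T, T' - T)" for T'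
  have fT: "finite T" using T finite_subset by blast
  have finS: "finite S" unfolding S_def by auto
  have inj: "inj_on \<phi> A"
  proof (rule inj_onI)
    fix X Y assume "X \<in> A" "Y \<in> A" "\<phi> X = \<phi> Y"
    hence "X \<inter> T = Y \<inter> T" "X - T = Y - T" unfolding \<phi>_def by auto
    thus "X = Y" by blast
  qed
  have img: "\<phi> ` A \<subseteq> Pow T \<times> S"
  proof
    fix z assume "z \<in> \<phi> ` A"
    then obtain T' where T'A: "T' \<in> A" and z: "z = \<phi> T'" by auto
    have fT': "finite T'" using T'A unfolding A_def by (auto intro: finite_subset)
    have "T' - T \<subset> T'" using T'A unfolding A_def by auto
    hence "card (T' - T) < card T'" using fT' by (intro psubset_card_mono) auto
    thus "z \<in> Pow T \<times> S" using T'A z unfolding \<phi>_def A_def S_def by auto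
  qed
  have "(\<Sum>T'\<in>A. x ^ card (T' - T)) = (\<Sum>z\<in>\<phi> ` A. x ^ card (snd z))"
    unfolding sum.reindex[OF inj] comp_def \<phi>_def by simp
  also have "\<dots> \<le> (\<Sum>z\<in>Pow T \<times> S. x ^ card (snd z))"
    using img finS fT x by (intro sum_mono2) auto
  also have "\<dots> = (\<Sum>a\<in>Pow T. \<Sum>R\<in>S. x ^ card R)"
    unfolding sum.cartesian_product by (simp add: split_beta)
  also have "\<dots> = 2 ^ t * (\<Sum>R\<in>S. x ^ card R)"
    using fT cT by (simp add: card_Pow)
  also have "(\<Sum>R\<in>S. x ^ card R) = (\<Sum>r<t. \<Sum>R\<in>{R\<in>S. card R = r}. x ^ card R)"
    using finS by (intro sum.group[symmetric]) (auto simp: S_def)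
  also have "\<dots> = (\<Sum>r<t. real (m choose r) * x ^ r)"
  proof (intro sum.cong refl)
    fix r assume r: "r \<in> {..<t}"
    have "{R\<in>S. card R = r} = {K\<in>Pow {..<m}. card K = r}" using r unfolding S_def by auto
    hence "card {R\<in>S. card R = r} = m choose r" by (simp add: n_subsets)
    thus "(\<Sum>R\<in>{R\<in>S. card R = r}. x ^ card R) = real (m choose r) * x ^ r"
      by simp
  qed
  finally show ?thesis unfolding A_def .
qed

lemma sum_overlapping_subsets_le:
  fixes q \<theta> :: real
  assumes T: "T \<subseteq> {..<m}" "card T = t" and q: "0 \<le> q" "real m * q \<le> \<theta>" and \<theta>: "1 \<le> \<theta>"
  shows "(\<Sum>T'\<in>{T'\<in>Pow {..<m}. card T' = t \<and> T \<inter> T' \<noteq> {}}. q ^ card (T' - T))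
    \<le> 2 ^ t * real t * \<theta> ^ t"
proof -
  have "real (m choose r) * q ^ r \<le> \<theta> ^ t" if "r < t" for r
  proof -
    have "real (m choose r) \<le> real m ^ r"
      by (cases "r \<le> m") (simp_all add: binomial_le_pow binomial_eq_0 flip: of_nat_power)
    then have "real (m choose r) * q ^ r \<le> (real m * q) ^ r"
      using q by (simp add: mult_right_mono power_mult_distrib)
    also have "\<dots> \<le> \<theta> ^ r" using q by (intro power_mono) auto
    also have "\<dots> \<le> \<theta> ^ t" using that \<theta> by (intro power_increasing) auto
    finally show ?thesis .
  qed
  then have "(\<Sum>r<t. real (m choose r) * q ^ r) \<le> real t * \<theta> ^ t"
    using sum_mono[of "{..<t}" "\<lambda>r. real (m choose r) * q ^ r" "\<lambda>_. \<theta> ^ t"] by simp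
  then have "2 ^ t * (\<Sum>r<t. real (m choose r) * q ^ r) \<le> 2 ^ t * real t * \<theta> ^ t"
    by (simp add: mult.assoc)
  then show ?thesis
    using sum_overlapping_subsets_le_binomial_sum[OF T q(1)] by linarith
qed

text \<open>Chebyshev's sum inequality: the sequences \<open>p i ^ t\<close> and \<open>p i\<close> are similarly ordered.\<close>

lemma power_sum_le_card_mult_power_sum_Suc:
  assumes nn: "\<And>i. i < n \<Longrightarrow> p i \<ge> (0::real)" and s: "(\<Sum>i<n. p i) = 1"
  shows "(\<Sum>i<n. p i ^ t) \<le> real n * (\<Sum>i<n. p i ^ Suc t)"
proof -
  let ?a = "\<lambda>i. p i ^ t"
  have pt: "0 \<le> (?a i - ?a j) * (p i - p j)" if "i < n" "j < n" for i j
  proof (cases "p j \<le> p i")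
    case True
    hence "?a j \<le> ?a i" using nn that by (intro power_mono) auto
    thus ?thesis using True by simp
  next
    case False
    hence "?a i \<le> ?a j" using nn that by (intro power_mono) auto
    thus ?thesis using False by (simp add: mult_nonpos_nonpos)
  qed
  have "0 \<le> (\<Sum>i<n. \<Sum>j<n. (?a i - ?a j) * (p i - p j))"
    using pt by (intro sum_nonneg) auto
  also have "\<dots> = (\<Sum>i<n. \<Sum>j<n. (?a i * p i + ?a j * p j) - (?a i * p j + ?a j * p i))"
    by (intro sum.cong refl) (simp add: algebra_simps)
  also have "\<dots> = 2 * real n * (\<Sum>i<n. ?a i * p i) - 2 * (\<Sum>i<n. ?a i) * (\<Sum>i<n. p i)"
  proof -
    have diagonal: "(\<Sum>i<n. \<Sum>j<n. (?a i * p i + ?a j * p j)) = 2 * real n * (\<Sum>i<n. ?a i * p i)"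
      by (simp add: sum.distrib sum_distrib_left mult.assoc)
    have cross: "(\<Sum>i<n. \<Sum>j<n. (?a i * p j + ?a j * p i)) = 2 * (\<Sum>i<n. ?a i) * (\<Sum>i<n. p i)"
    proof -
      have "(\<Sum>i<n. \<Sum>j<n. ?a i * p j) = (\<Sum>i<n. ?a i) * (\<Sum>i<n. p i)" by (simp add: sum_product)
      moreover have "(\<Sum>i<n. \<Sum>j<n. ?a j * p i) = (\<Sum>i<n. ?a i) * (\<Sum>i<n. p i)"
        by (subst sum.swap) (simp add: sum_product)
      ultimately show ?thesis by (simp add: sum.distrib)
    qed
    show ?thesis by (simp only: sum_subtractf diagonal cross)
  qed
  finally show ?thesis using s by (simp add: mult.commute)
qed

lemma power_mean_lower_bound:
  assumes nn: "\<And>i. i < n \<Longrightarrow> p i \<ge> (0::real)" and s: "(\<Sum>i<n. p i) = 1" and t: "1 \<le> t"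
  shows "1 \<le> (\<Sum>i<n. p i ^ t) * real n ^ (t - 1)"
  using t
proof (induction t rule: dec_induct)
  case base thus ?case using s by simp
next
  case (step k)
  have "1 \<le> (\<Sum>i<n. p i ^ k) * real n ^ (k - 1)" by fact
  also have "\<dots> \<le> real n * (\<Sum>i<n. p i ^ Suc k) * real n ^ (k - 1)"
    using power_sum_le_card_mult_power_sum_Suc[OF nn s, of k] by (intro mult_right_mono) auto
  also have "\<dots> = (\<Sum>i<n. p i ^ Suc k) * real n ^ (Suc k - 1)"
    using step(1) by (cases k) (auto simp: algebra_simps)
  finally show ?case .
qed

section \<open>A heavily loaded bin\<close>

lemma block_missing_bin_if_load_less:
  assumes ts: "t * s \<le> m" and load: "card {j\<in>{..<m}. f j = i} < t"
  shows "\<exists>g<t. \<forall>j\<in>{g * s..<Suc g * s}. f j \<noteq> i"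
proof (rule ccontr)
  assume "\<not> ?thesis"
  then have "\<forall>g\<in>{..<t}. \<exists>j\<in>{g * s..<Suc g * s}. f j = i" by (meson lessThan_iff)
  then obtain c where c: "\<forall>g\<in>{..<t}. c g \<in> {g * s..<Suc g * s} \<and> f (c g) = i"
    by (metis bchoice)
  have "inj_on c {..<t}"
  proof (rule inj_onI)
    fix g g' assume g: "g \<in> {..<t}" "g' \<in> {..<t}" and "c g = c g'"
    moreover have "c g \<in> {g * s..<Suc g * s}" "c g' \<in> {g' * s..<Suc g' * s}" using c g by auto
    ultimately have "g * s < Suc g' * s" "g' * s < Suc g * s" by (simp_all only: atLeastLessThan_iff) linarith+
    then have "g < Suc g'" "g' < Suc g" by (metis mult_less_cancel2)+
    then show "g = g'" by simp
  qed
  moreover have "c ` {..<t} \<subseteq> {j\<in>{..<m}. f j = i}"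
  proof (rule image_subsetI)
    fix g assume "g \<in> {..<t}"
    then have "c g < Suc g * s" "f (c g) = i" using c by auto
    moreover have "Suc g * s \<le> t * s" using \<open>g \<in> {..<t}\<close> by (intro mult_le_mono1) simp
    ultimately show "c g \<in> {j\<in>{..<m}. f j = i}" using ts by simp
  qed
  then have "card (c ` {..<t}) \<le> card {j\<in>{..<m}. f j = i}" by (intro card_mono) auto
  ultimately show False using load by (simp add: card_image)
qed

lemma prob_bin_load_less_le:
  assumes nn: "\<And>i. i < n \<Longrightarrow> p i \<ge> 0" and s: "(\<Sum>i<n. p i) = 1" and i: "i < n"
  shows "measure_pmf.prob (throws m n p) {f. card {j\<in>{..<m}. f j = i} < t}
    \<le> real t * (1 - p i) ^ (m div t)"
proof -
  define G where "G g = {g * (m div t)..<Suc g * (m div t)}" for g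
  have G_sub: "G g \<subseteq> {..<m}" if "g < t" for g
  proof -
    have "Suc g * (m div t) \<le> t * (m div t)" using that by (intro mult_le_mono1) simp
    also have "\<dots> \<le> m" by (simp add: mult.commute)
    finally show ?thesis by (auto simp: G_def)
  qed
  have miss_prob: "measure_pmf.prob (ball_pmf n p) (UNIV - {i}) = 1 - p i"
    using measure_pmf.prob_compl[of "{i}" "ball_pmf n p"] pmf_ball_pmf[OF nn s, of i] i
    by (simp add: measure_pmf_single)
  have "{f. card {j\<in>{..<m}. f j = i} < t} \<subseteq> (\<Union>g<t. {f. \<forall>j\<in>G g. f j \<in> UNIV - {i}})"
  proof
    fix f assume "f \<in> {f. card {j\<in>{..<m}. f j = i} < t}"
    then obtain g where "g < t" "\<forall>j\<in>G g. f j \<noteq> i"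
      using block_missing_bin_if_load_less[of t "m div t" m f i] times_div_less_eq_dividend[of t m]
      unfolding G_def by auto
    then show "f \<in> (\<Union>g<t. {f. \<forall>j\<in>G g. f j \<in> UNIV - {i}})" by blast
  qed
  then have "measure_pmf.prob (throws m n p) {f. card {j\<in>{..<m}. f j = i} < t}
      \<le> measure_pmf.prob (throws m n p) (\<Union>g<t. {f. \<forall>j\<in>G g. f j \<in> UNIV - {i}})"
    by (intro measure_pmf.finite_measure_mono) auto
  also have "\<dots> \<le> (\<Sum>g<t. measure_pmf.prob (throws m n p) {f. \<forall>j\<in>G g. f j \<in> UNIV - {i}})"
    by (intro measure_pmf.finite_measure_subadditive_finite) auto
  also have "\<dots> = (\<Sum>g<t. (1 - p i) ^ (m div t))"
  proof (intro sum.cong refl)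
    fix g assume "g \<in> {..<t}"
    then show "measure_pmf.prob (throws m n p) {f. \<forall>j\<in>G g. f j \<in> UNIV - {i}} = (1 - p i) ^ (m div t)"
      using prob_throws_forall[OF G_sub, of g n p "\<lambda>_. UNIV - {i}"] by (simp add: miss_prob G_def)
  qed
  finally show ?thesis by simp
qed

lemma prob_max_load_less_heavy_bin:
  assumes nn: "\<And>i. i < n \<Longrightarrow> p i \<ge> 0" and s: "(\<Sum>i<n. p i) = 1"
    and i: "i < n" and t: "1 \<le> t" and heavy: "real t ^ 2 < real m * p i"
  shows "measure_pmf.prob (throws m n p) {f. max_load m n f < t} \<le> real t * exp (1 - real t)"
proof -
  have p0: "0 \<le> p i" using nn i by simp
  have p1: "p i \<le> 1" using s nn i member_le_sum[of i "{..<n}" p] by auto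
  have "real t - 1 \<le> p i * real (m div t)"
  proof -
    have "real m = real (m div t) * real t + real (m mod t)"
      by (metis of_nat_add of_nat_mult mult_div_mod_eq mult.commute)
    moreover have "real (m mod t) \<le> real t" using t by simp
    ultimately have "real m * p i \<le> real t * (1 + real (m div t)) * p i"
      using p0 by (intro mult_right_mono) (simp_all add: algebra_simps)
    then have "real t * real t < real t * ((1 + real (m div t)) * p i)"
      using heavy by (simp add: power2_eq_square mult.assoc)
    then have "real t < (1 + real (m div t)) * p i"
      using t by (simp add: mult_less_cancel_left_pos)
    then show ?thesis using p1 by (simp add: algebra_simps)
  qed
  have "measure_pmf.prob (throws m n p) {f. max_load m n f < t}
      \<le> measure_pmf.prob (throws m n p) {f. card {j\<in>{..<m}. f j = i} < t}"
    using card_le_max_load[OF i] by (intro measure_pmf.finite_measure_mono) (auto intro: le_less_trans)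
  also have "\<dots> \<le> real t * (1 - p i) ^ (m div t)" by (rule prob_bin_load_less_le[OF nn s i])
  also have "\<dots> \<le> real t * exp (- p i) ^ (m div t)"
    using p1 exp_ge_add_one_self[of "- p i"] by (intro mult_left_mono power_mono) auto
  also have "\<dots> = real t * exp (- (p i * real (m div t)))"
    by (simp add: exp_of_nat_mult[symmetric] algebra_simps)
  also have "\<dots> \<le> real t * exp (1 - real t)"
    using \<open>real t - 1 \<le> p i * real (m div t)\<close> by (intro mult_left_mono) auto
  finally show ?thesis .
qed

section \<open>Only lightly loaded bins\<close>

lemma sum_prob_all_in_bin_inter_le:
  fixes \<theta> :: real and t :: nat
  assumes nn: "\<And>i. i < n \<Longrightarrow> p i \<ge> 0" and s: "(\<Sum>i<n. p i) = 1"
    and small: "\<And>i. i < n \<Longrightarrow> real m * p i \<le> \<theta>" and \<theta>: "1 \<le> \<theta>"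
    and I_def: "I = {T\<in>Pow {..<m}. card T = t} \<times> {..<n}"
    and \<mu>_def: "\<mu> = (\<Sum>a\<in>I. measure_pmf.prob (throws m n p) (case_prod all_in_bin a))"
    and T: "T \<subseteq> {..<m}" "card T = t" and i: "i < n"
  shows "(\<Sum>b\<in>I. measure_pmf.prob (throws m n p) (all_in_bin T i \<inter> case_prod all_in_bin b))
    \<le> p i ^ t * \<mu> + 2 ^ t * real t * \<theta> ^ t * p i ^ t"
proof -
  let ?P = "measure_pmf.prob (throws m n p)"
  define overlap where "overlap T' = (if T \<inter> T' \<noteq> {} then p i ^ t * p i ^ card (T' - T) else 0)" for T'
  have "(\<Sum>b\<in>I. ?P (all_in_bin T i \<inter> case_prod all_in_bin b))
      \<le> (\<Sum>b\<in>I. p i ^ t * ?P (case_prod all_in_bin b) + (if snd b = i then overlap (fst b) else 0))"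
  proof (rule sum_mono)
    fix b assume "b \<in> I"
    then obtain T' i' where b: "b = (T', i')" and T': "T' \<subseteq> {..<m}" "card T' = t" and i': "i' < n"
      by (auto simp: I_def)
    have "?P (all_in_bin T i \<inter> all_in_bin T' i') \<le> p i ^ t * p i' ^ t
        + (if T \<inter> T' \<noteq> {} \<and> i = i' then p i ^ t * p i ^ card (T' - T) else 0)"
      using prob_all_in_bin_inter_le[OF nn s T(1) T'(1) i i'] unfolding T(2) T'(2) .
    then show "?P (all_in_bin T i \<inter> case_prod all_in_bin b)
        \<le> p i ^ t * ?P (case_prod all_in_bin b) + (if snd b = i then overlap (fst b) else 0)"
      using prob_all_in_bin[OF nn s T'(1) i'] by (cases "i' = i") (simp_all add: b T'(2) overlap_def)
  qed
  also have "\<dots> = p i ^ t * \<mu> + (\<Sum>b\<in>I. if snd b = i then overlap (fst b) else 0)"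
    by (simp add: sum.distrib sum_distrib_left \<mu>_def)
  also have "(\<Sum>b\<in>I. if snd b = i then overlap (fst b) else 0)
      = (\<Sum>T'\<in>{T'\<in>Pow {..<m}. card T' = t}. \<Sum>i'<n. if i' = i then overlap T' else 0)"
    unfolding I_def sum.cartesian_product by (intro sum.cong refl) auto
  also have "\<dots> = p i ^ t * (\<Sum>T'\<in>{T'\<in>Pow {..<m}. card T' = t \<and> T \<inter> T' \<noteq> {}}. p i ^ card (T' - T))"
    using i by (simp add: overlap_def sum.inter_filter[symmetric] sum_distrib_left conj_assoc)
  also have "\<dots> \<le> p i ^ t * (2 ^ t * real t * \<theta> ^ t)"
    using sum_overlapping_subsets_le[OF T nn[OF i] small[OF i] \<theta>] nn[OF i] by (intro mult_left_mono) auto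
  finally show ?thesis by (simp add: mult.commute)
qed

lemma sum_prob_all_in_bin_pairs_le:
  fixes \<theta> :: real and t :: nat
  assumes nn: "\<And>i. i < n \<Longrightarrow> p i \<ge> 0" and s: "(\<Sum>i<n. p i) = 1"
    and small: "\<And>i. i < n \<Longrightarrow> real m * p i \<le> \<theta>" and \<theta>: "1 \<le> \<theta>"
    and I_def: "I = {T\<in>Pow {..<m}. card T = t} \<times> {..<n}"
    and \<mu>_def: "\<mu> = (\<Sum>a\<in>I. measure_pmf.prob (throws m n p) (case_prod all_in_bin a))"
  shows "(\<Sum>a\<in>I. \<Sum>b\<in>I. measure_pmf.prob (throws m n p) (case_prod all_in_bin a \<inter> case_prod all_in_bin b))
    \<le> \<mu>\<^sup>2 + 2 ^ t * real t * \<theta> ^ t * \<mu>"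
proof -
  let ?P = "measure_pmf.prob (throws m n p)"
  let ?E = "case_prod all_in_bin"
  define B where "B = 2 ^ t * real t * \<theta> ^ t"
  have "(\<Sum>b\<in>I. ?P (?E a \<inter> ?E b)) \<le> ?P (?E a) * \<mu> + B * ?P (?E a)" if a: "a \<in> I" for a
  proof -
    obtain T i where "a = (T, i)" "T \<subseteq> {..<m}" "card T = t" "i < n" using a by (auto simp: I_def)
    then show ?thesis
      using sum_prob_all_in_bin_inter_le[OF nn s small \<theta> I_def \<mu>_def] prob_all_in_bin[OF nn s]
      by (simp add: B_def)
  qed
  then have "(\<Sum>a\<in>I. \<Sum>b\<in>I. ?P (?E a \<inter> ?E b)) \<le> (\<Sum>a\<in>I. ?P (?E a) * \<mu> + B * ?P (?E a))"
    by (rule sum_mono)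
  also have "\<dots> = (\<Sum>a\<in>I. ?P (?E a)) * \<mu> + B * (\<Sum>a\<in>I. ?P (?E a))"
    by (simp add: sum.distrib sum_distrib_left sum_distrib_right)
  also have "\<dots> = \<mu>\<^sup>2 + B * \<mu>" by (simp add: \<mu>_def power2_eq_square)
  finally show ?thesis by (simp add: B_def)
qed

lemma prob_no_all_in_bin_le:
  fixes \<theta> :: real
  assumes nn: "\<And>i. i < n \<Longrightarrow> p i \<ge> 0" and s: "(\<Sum>i<n. p i) = 1"
    and t: "1 \<le> t" "t \<le> m" and small: "\<And>i. i < n \<Longrightarrow> real m * p i \<le> \<theta>" and \<theta>: "1 \<le> \<theta>"
  shows "measure_pmf.prob (throws m n p)
      {f. \<forall>a\<in>{T\<in>Pow {..<m}. card T = t} \<times> {..<n}. f \<notin> case_prod all_in_bin a}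
    \<le> 2 ^ t * real t * \<theta> ^ t / (real (m choose t) * (\<Sum>i<n. p i ^ t))"
proof -
  let ?P = "measure_pmf.prob (throws m n p)"
  define I where "I = {T\<in>Pow {..<m}. card T = t} \<times> {..<n}"
  define \<mu> where "\<mu> = (\<Sum>a\<in>I. ?P (case_prod all_in_bin a))"
  define S where "S = (\<Sum>i<n. p i ^ t)"
  have "?P (case_prod all_in_bin a) = p (snd a) ^ t" if "a \<in> I" for a
    using that prob_all_in_bin[OF nn s] by (auto simp: I_def)
  then have "\<mu> = (\<Sum>a\<in>I. p (snd a) ^ t)" unfolding \<mu>_def by (rule sum.cong[OF refl])
  also have "\<dots> = (\<Sum>T\<in>{T\<in>Pow {..<m}. card T = t}. \<Sum>i<n. p i ^ t)"
    unfolding I_def sum.cartesian_product by (simp add: split_beta)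
  also have "\<dots> = real (m choose t) * S"
    using n_subsets[of "{..<m}" t] by (simp add: S_def Pow_def)
  finally have \<mu>: "\<mu> = real (m choose t) * S" .
  have "1 \<le> S * real n ^ (t - 1)" unfolding S_def by (rule power_mean_lower_bound[OF nn s t(1)])
  moreover have "0 \<le> S" unfolding S_def using nn by (intro sum_nonneg) auto
  ultimately have "0 < S" by (cases "S = 0") auto
  then have "0 < \<mu>" using t(2) by (simp add: \<mu>)
  have "?P {f. \<forall>a\<in>I. f \<notin> case_prod all_in_bin a} \<le> 2 ^ t * real t * \<theta> ^ t * \<mu> / \<mu>\<^sup>2"
    using sum_prob_all_in_bin_pairs_le[OF nn s small \<theta> I_def \<mu>_def]
    by (intro prob_none_le_second_moment[OF \<mu>_def \<open>0 < \<mu>\<close>])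
  also have "\<dots> = 2 ^ t * real t * \<theta> ^ t / \<mu>" using \<open>0 < \<mu>\<close> by (simp add: power2_eq_square)
  finally show ?thesis by (simp add: I_def \<mu> S_def)
qed

lemma prob_max_load_less_light_bins:
  assumes nn: "\<And>i. i < n \<Longrightarrow> p i \<ge> 0" and s: "(\<Sum>i<n. p i) = 1"
    and t: "1 \<le> t" "t \<le> m" and light: "\<And>i. i < n \<Longrightarrow> real m * p i \<le> real t ^ 2"
  shows "measure_pmf.prob (throws m n p) {f. max_load m n f < t}
    \<le> real t * (2 * real t ^ 3 * real n / real m) ^ t / real n"
proof -
  let ?P = "measure_pmf.prob (throws m n p)"
  define S where "S = (\<Sum>i<n. p i ^ t)"
  have n0: "0 < n" using s by (cases n) auto
  have m0: "0 < m" using t by simp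
  have "{f. max_load m n f < t} \<subseteq> {f. \<forall>a\<in>{T\<in>Pow {..<m}. card T = t} \<times> {..<n}. f \<notin> case_prod all_in_bin a}"
    using not_in_all_in_bin_if_max_load_less by fastforce
  then have "?P {f. max_load m n f < t}
      \<le> ?P {f. \<forall>a\<in>{T\<in>Pow {..<m}. card T = t} \<times> {..<n}. f \<notin> case_prod all_in_bin a}"
    by (intro measure_pmf.finite_measure_mono) auto
  also have "\<dots> \<le> 2 ^ t * real t * (real t ^ 2) ^ t / (real (m choose t) * S)"
    unfolding S_def using t by (intro prob_no_all_in_bin_le[OF nn s t light]) auto
  also have "\<dots> \<le> 2 ^ t * real t * (real t ^ 2) ^ t / ((real m / real t) ^ t * (1 / real n ^ (t - 1)))"
  proof (rule divide_left_mono)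
    have "1 / real n ^ (t - 1) \<le> S"
      using power_mean_lower_bound[OF nn s t(1)] n0 by (simp add: S_def field_simps)
    then show lower: "(real m / real t) ^ t * (1 / real n ^ (t - 1)) \<le> real (m choose t) * S"
      using binomial_ge_n_over_k_pow_k[OF t(2)] by (intro mult_mono) auto
    have "0 < (real m / real t) ^ t * (1 / real n ^ (t - 1))" using m0 n0 t by simp
    with lower show "0 < real (m choose t) * S * ((real m / real t) ^ t * (1 / real n ^ (t - 1)))"
      by (metis mult_pos_pos order_less_le_trans)
  qed simp
  also have "\<dots> = real t * (2 * real t ^ 3 * real n / real m) ^ t / real n"
  proof -
    have "real n ^ t = real n * real n ^ (t - 1)" using t by (metis power_eq_if not_one_le_zero)
    then show ?thesis using m0 n0 t
      by (simp add: field_simps power_mult_distrib power_mult[symmetric] power_divide)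
        (simp add: power_mult_distrib[symmetric] power_add[symmetric] mult.commute numeral_eq_Suc)
  qed
  finally show ?thesis .
qed

lemma prob_max_load_less_le:
  assumes nn: "\<And>i. i < n \<Longrightarrow> p i \<ge> 0" and s: "(\<Sum>i<n. p i) = 1" and t: "1 \<le> t" "t \<le> m"
  shows "measure_pmf.prob (throws m n p) {f. max_load m n f < t}
    \<le> real t * exp (1 - real t) + real t * (2 * real t ^ 3 * real n / real m) ^ t / real n"
proof (cases "\<exists>i<n. real t ^ 2 < real m * p i")
  case True
  then obtain i where "i < n" "real t ^ 2 < real m * p i" by blast
  then have "measure_pmf.prob (throws m n p) {f. max_load m n f < t} \<le> real t * exp (1 - real t)"
    by (intro prob_max_load_less_heavy_bin[OF nn s _ t(1)])
  moreover have "0 \<le> real t * (2 * real t ^ 3 * real n / real m) ^ t / real n" by simp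
  ultimately show ?thesis by linarith
next
  case False
  then have "real m * p i \<le> real t ^ 2" if "i < n" for i
    using that leI by blast
  from prob_max_load_less_light_bins[OF nn s t this]
  have "measure_pmf.prob (throws m n p) {f. max_load m n f < t}
      \<le> real t * (2 * real t ^ 3 * real n / real m) ^ t / real n" .
  moreover have "0 \<le> real t * exp (1 - real t)" by simp
  ultimately show ?thesis by linarith
qed

section \<open>Asymptotics\<close>

lemma ln_le_of_ge_polylog_ratio:
  fixes x C mm :: real
  assumes C: "0 < C" and x: "0 < x" and L: "1 < ln x"
    and h: "(real k + 2) * ln (ln x) - ln C \<le> ln x" and hm: "C * x / ln x ^ k \<le> mm"
  shows "ln x \<le> mm"
proof -
  have "ln x * ln x ^ k \<le> ln x ^ (k + 2)" using L by (simp add: power_add power2_eq_square)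
  also have "\<dots> = exp (real (k + 2) * ln (ln x))" using L by (subst exp_of_nat_mult) simp
  also have "\<dots> \<le> exp (ln x + ln C)" using h by (simp add: add.commute)
  also have "\<dots> = C * x" using C x by (simp add: exp_add)
  also have "\<dots> \<le> mm * ln x ^ k" using hm L by (simp add: field_simps)
  finally show ?thesis using L by (simp add: mult_le_cancel_right_pos)
qed

lemma light_ratio_le:
  fixes x C mm :: real and k t :: nat
  assumes C: "0 < C" and x: "1 < x" and hm: "C * x / ln x ^ k \<le> mm" and t: "real t \<le> ln x"
  shows "2 * real t ^ 3 * x / mm \<le> 2 * ln x ^ (k + 3) / C"
proof -
  have "0 < x" "0 < ln x" using x by simp_all
  then have "0 < C * x / ln x ^ k" using C by simp
  then have "0 < mm" using hm by linarith
  have "real t ^ 3 \<le> ln x ^ 3" using t by (intro power_mono) auto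
  moreover have "x / mm \<le> ln x ^ k / C"
    using hm C \<open>0 < mm\<close> \<open>0 < ln x\<close> by (simp add: field_simps)
  ultimately have "real t ^ 3 * (x / mm) \<le> ln x ^ 3 * (ln x ^ k / C)"
    using \<open>0 < x\<close> \<open>0 < mm\<close> \<open>0 < ln x\<close> by (intro mult_mono) auto
  moreover have "2 * ln x ^ (k + 3) / C = 2 * (ln x ^ 3 * (ln x ^ k / C))"
    by (simp add: power_add mult.commute)
  moreover have "2 * real t ^ 3 * x / mm = 2 * (real t ^ 3 * (x / mm))" by simp
  ultimately show ?thesis by linarith
qed

lemma light_term_le_exp:
  fixes x C c mm :: real and k t :: nat
  assumes C: "0 < C" and c: "c = 1 / (2 * (real k + 3))" and x: "1 < x" and l: "0 < ln (ln x)"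
    and hB: "ln C - ln 2 \<le> (real k + 3) * ln (ln x)" and hm: "C * x / ln x ^ k \<le> mm"
    and t: "real t \<le> ln x" "real t \<le> c * ln x / ln (ln x) + 1"
  shows "real t * (2 * real t ^ 3 * x / mm) ^ t / x
    \<le> exp (c * (ln 2 - ln C) * ln x / ln (ln x) + (real k + 4) * ln (ln x) + (ln 2 - ln C) - ln x / 2)"
proof -
  define L where "L = ln x"
  define l where "l = ln L"
  define y where "y = c * L / l"
  define B where "B = 2 * L ^ (k + 3) / C"
  have "0 < x" "0 < L" using x by (simp_all add: L_def)
  have "0 < C * x / L ^ k" using C \<open>0 < x\<close> \<open>0 < L\<close> by simp
  then have "0 < mm" using hm unfolding L_def by linarith
  have "0 < B" using C \<open>0 < L\<close> by (simp add: B_def)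
  have lnB: "ln B = ln 2 - ln C + (real k + 3) * l"
    using C \<open>0 < L\<close> by (simp add: B_def l_def ln_mult ln_div ln_realpow)
  have "0 \<le> ln B" using hB unfolding lnB l_def L_def by simp
  have "(2 * real t ^ 3 * x / mm) ^ t \<le> B ^ t"
    using light_ratio_le[OF C x hm t(1)] \<open>0 < x\<close> \<open>0 < mm\<close>
    by (intro power_mono) (auto simp: B_def L_def)
  also have "\<dots> = exp (real t * ln B)" using \<open>0 < B\<close> by (simp add: exp_of_nat_mult)
  also have "\<dots> \<le> exp ((y + 1) * ln B)"
    using t(2) \<open>0 \<le> ln B\<close> unfolding y_def L_def l_def by (simp add: mult_right_mono)
  finally have "real t * (2 * real t ^ 3 * x / mm) ^ t / x \<le> L * exp ((y + 1) * ln B) / x"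
    using t(1) x \<open>0 < mm\<close> unfolding L_def by (intro divide_right_mono mult_mono) auto
  also have "\<dots> = exp (l + (y + 1) * ln B - L)"
    using \<open>0 < x\<close> \<open>0 < L\<close> by (simp add: exp_add exp_diff l_def L_def)
  also have "l + (y + 1) * ln B - L
      = y * (ln 2 - ln C) + y * ((real k + 3) * l) + (ln 2 - ln C) + (real k + 4) * l - L"
    unfolding lnB by (simp add: algebra_simps)
  also have "y * ((real k + 3) * l) = L / 2"
  proof -
    define a where "a = real k + 3"
    have "l \<noteq> 0" using l by (simp add: l_def L_def)
    have "a \<noteq> 0" by (simp add: a_def)
    then have "c * a = 1 / 2" by (simp add: c flip: a_def)
    then show ?thesis using \<open>l \<noteq> 0\<close> by (simp add: y_def field_simps flip: a_def)
  qed
  finally show ?thesis by (simp add: y_def L_def l_def algebra_simps)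
qed

lemma tendsto_exp_minus_half_ln:
  fixes d e f :: real
  shows "((\<lambda>x. exp (d * ln x / ln (ln x) + e * ln (ln x) + f - ln x / 2)) \<longlongrightarrow> 0) at_top"
proof (rule tendsto_sandwich[OF _ _ tendsto_const])
  have "\<forall>\<^sub>F x in at_top. d * ln x / ln (ln x) + e * ln (ln x) + f \<le> ln x / 4" by real_asymp
  then show "\<forall>\<^sub>F x in at_top. exp (d * ln x / ln (ln x) + e * ln (ln x) + f - ln x / 2) \<le> exp (- ln x / 4)"
    by eventually_elim (subst exp_le_cancel_iff, linarith)
  show "((\<lambda>x::real. exp (- ln x / 4)) \<longlongrightarrow> 0) at_top" by real_asymp
qed simp

definition failure_bound :: "real \<Rightarrow> nat \<Rightarrow> real \<Rightarrow> real \<Rightarrow> real" where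
  "failure_bound C k c x =
     real (nat \<lceil>c * ln x / ln (ln x)\<rceil>) * exp (1 - real (nat \<lceil>c * ln x / ln (ln x)\<rceil>))
     + exp (c * (ln 2 - ln C) * ln x / ln (ln x) + (real k + 4) * ln (ln x) + (ln 2 - ln C) - ln x / 2)"

lemma failure_bound_tendsto_zero:
  assumes "0 < c"
  shows "(failure_bound C k c \<longlongrightarrow> 0) at_top"
proof -
  have "filterlim (\<lambda>x::real. ln x / ln (ln x)) at_top at_top" by real_asymp
  then have "filterlim (\<lambda>x. c * (ln x / ln (ln x))) at_top at_top"
    using assms by (intro filterlim_tendsto_pos_mult_at_top[OF tendsto_const]) auto
  then have "filterlim (\<lambda>x. real (nat \<lceil>c * ln x / ln (ln x)\<rceil>)) at_top at_top"
    by (rule filterlim_at_top_mono) (auto intro!: always_eventually simp: real_nat_ceiling_ge)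
  moreover have "((\<lambda>s::real. s * exp (1 - s)) \<longlongrightarrow> 0) at_top" by real_asymp
  ultimately have "((\<lambda>x. real (nat \<lceil>c * ln x / ln (ln x)\<rceil>) * exp (1 - real (nat \<lceil>c * ln x / ln (ln x)\<rceil>)))
      \<longlongrightarrow> 0) at_top"
    by (rule filterlim_compose[rotated])
  then have "(failure_bound C k c \<longlongrightarrow> 0 + 0) at_top"
    unfolding failure_bound_def[abs_def] by (intro tendsto_add tendsto_exp_minus_half_ln)
  then show ?thesis by simp
qed

lemma prob_max_load_ge_at_point:
  fixes p :: "nat \<Rightarrow> real" and C c :: real and k n :: nat
  assumes nn: "\<And>i. i < n \<Longrightarrow> p i \<ge> 0" and s: "(\<Sum>i<n. p i) = 1"
    and C: "0 < C" and c: "c = 1 / (2 * (real k + 3))"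
    and hm: "C * real n / ln (real n) ^ k \<le> real m"
    and l1: "1 \<le> ln (ln (real n))" and h_power: "(real k + 2) * ln (ln (real n)) - ln C \<le> ln (real n)"
    and h_const: "\<bar>ln 2 - ln C\<bar> \<le> ln (ln (real n))"
    and h_threshold: "c * ln (real n) / ln (ln (real n)) + 1 \<le> ln (real n)"
  shows "1 - failure_bound C k c (real n)
    \<le> measure_pmf.prob (throws m n p) {f. c * ln (real n) / ln (ln (real n)) \<le> real (max_load m n f)}"
proof -
  let ?P = "measure_pmf.prob (throws m n p)"
  define L where "L = ln (real n)"
  define y where "y = c * L / ln L"
  define t where "t = nat \<lceil>y\<rceil>"
  have "0 < n" using s by (cases n) auto
  then have "0 \<le> L" by (simp add: L_def)
  then have "1 < L" using l1 ln_gt_zero_imp_gt_one[of L] by (cases "L = 0") (simp_all add: L_def)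
  then have "0 < ln (real n)" by (simp add: L_def)
  from this of_nat_0_less_iff[THEN iffD2, OF \<open>0 < n\<close>] have "1 < real n"
    by (rule ln_gt_zero_imp_gt_one)
  have "0 < y" using \<open>1 < L\<close> l1 by (simp add: y_def c L_def)
  then have t_bounds: "y \<le> real t" "real t \<le> y + 1" "1 \<le> t" unfolding t_def by linarith+
  have "real t \<le> L" using t_bounds h_threshold by (simp add: y_def L_def)
  have "L \<le> real m"
    using ln_le_of_ge_polylog_ratio[OF C _ _ h_power hm] \<open>0 < n\<close> \<open>1 < L\<close> by (simp add: L_def)
  then have "t \<le> m" using \<open>real t \<le> L\<close> by linarith
  have "1 * ln L \<le> (real k + 3) * ln L" using l1 by (intro mult_right_mono) (auto simp: L_def)
  then have "ln C - ln 2 \<le> (real k + 3) * ln L" using h_const by (auto simp: abs_le_iff L_def)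
  then have light: "real t * (2 * real t ^ 3 * real n / real m) ^ t / real n
      \<le> exp (c * (ln 2 - ln C) * L / ln L + (real k + 4) * ln L + (ln 2 - ln C) - L / 2)"
    using light_term_le_exp[OF C c \<open>1 < real n\<close> _ _ hm] l1 \<open>real t \<le> L\<close> t_bounds(2)
    by (simp add: L_def y_def)
  have "{f. max_load m n f < t} = UNIV - {f. t \<le> max_load m n f}" by auto
  then have "1 - ?P {f. t \<le> max_load m n f} = ?P {f. max_load m n f < t}"
    using measure_pmf.prob_compl[of "{f. t \<le> max_load m n f}" "throws m n p"] by simp
  also have "\<dots> \<le> real t * exp (1 - real t) + real t * (2 * real t ^ 3 * real n / real m) ^ t / real n"
    by (rule prob_max_load_less_le[OF nn s \<open>1 \<le> t\<close> \<open>t \<le> m\<close>])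
  finally have "1 - failure_bound C k c (real n) \<le> ?P {f. t \<le> max_load m n f}"
    using light by (simp add: failure_bound_def t_def y_def L_def)
  also have "\<dots> \<le> ?P {f. y \<le> real (max_load m n f)}"
    using t_bounds(1) by (intro measure_pmf.finite_measure_mono) auto
  finally show ?thesis unfolding y_def L_def .
qed

theorem mainTheorem20:
  fixes m :: "nat \<Rightarrow> nat" and p :: "nat \<Rightarrow> nat \<Rightarrow> real"
  assumes p_nonneg: "\<forall>n i. i < n \<longrightarrow> p n i \<ge> 0"
    and p_sum: "\<forall>n>0. (\<Sum>i<n. p n i) = 1"
    and m_large: "\<exists>C>0. \<exists>k::nat. eventually (\<lambda>n. real (m n) \<ge> C * real n / ln (real n) ^ k) at_top"
  shows "\<exists>c>0. (\<lambda>n. measure_pmf.prob (throws (m n) n (p n))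
            {f. real (max_load (m n) n f) \<ge> c * ln (real n) / ln (ln (real n))}) \<longlonglongrightarrow> 1"
proof -
  obtain C k where C: "C > 0" and m_ev: "eventually (\<lambda>n. real (m n) \<ge> C * real n / ln (real n) ^ k) at_top"
    using m_large by auto
  define c where "c = 1 / (2 * (real k + 3))"
  have "\<forall>\<^sub>F x in at_top. 1 \<le> ln (ln x) \<and> (real k + 2) * ln (ln x) - ln C \<le> ln x
      \<and> \<bar>ln 2 - ln C\<bar> \<le> ln (ln x) \<and> c * ln x / ln (ln x) + 1 \<le> ln x"
    by (intro eventually_conj; real_asymp)
  from eventually_compose_filterlim[OF this filterlim_real_sequentially] m_ev eventually_gt_at_top[of 0]
  have lower: "\<forall>\<^sub>F n in sequentially. 1 - failure_bound C k c (real n) \<le> measure_pmf.prob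
      (throws (m n) n (p n)) {f. real (max_load (m n) n f) \<ge> c * ln (real n) / ln (ln (real n))}"
    by eventually_elim (intro prob_max_load_ge_at_point[OF _ _ C c_def]; use p_nonneg p_sum in auto)
  have "0 < c" by (simp add: c_def)
  have "(\<lambda>n. failure_bound C k c (real n)) \<longlonglongrightarrow> 0"
    by (rule filterlim_compose[OF failure_bound_tendsto_zero[OF \<open>0 < c\<close>] filterlim_real_sequentially])
  then have "(\<lambda>n. 1 - failure_bound C k c (real n)) \<longlonglongrightarrow> 1"
    using tendsto_diff[OF tendsto_const, of _ 0 sequentially 1] by simp
  from tendsto_sandwich[OF lower _ this tendsto_const]
  have "(\<lambda>n. measure_pmf.prob (throws (m n) n (p n))
      {f. real (max_load (m n) n f) \<ge> c * ln (real n) / ln (ln (real n))}) \<longlonglongrightarrow> 1"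
    by simp
  with \<open>0 < c\<close> show ?thesis by blast
qed

end
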